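(* Let $\sigma$ be a monotone function on $(0,\infty)$ with $\sigma(y)\nearrow\infty$, and let $F$ be an entire function with $|F(x+iy)|\le e^{|y|\sigma(|y|)}$ for all $x+iy\in\mathbb{C}$. If $F$ has $n$ zeros on an interval $[a,b]$, then $$|F(x)|\le (b-a)^n\min_{y>0}\frac{e^{y\sigma(y)}}{y^n}\quad\text{for every } x\in[a,b].$$ *)

theory Defs
  imports "HOL-Complex_Analysis.Complex_Analysis"
begin

text \<open>An entire function F has (at least) n zeros on a set S of reals, counted with
multiplicity: there are real points x_1,...,x_n in S (repetitions allowed) such that
F factors as (z - x_1)...(z - x_n) G(z) with G entire.\<close>
definition has_n_zeros_on :: "(complex \<Rightarrow> complex) \<Rightarrow> nat \<Rightarrow> real set \<Rightarrow> bool" where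
  "has_n_zeros_on F n S \<longleftrightarrow>
     (\<exists>xs G. length xs = n \<and> set xs \<subseteq> S \<and> G holomorphic_on UNIV \<and>
        (\<forall>z. F z = (\<Prod>x\<leftarrow>xs. z - complex_of_real x) * G z))"

end

theory Submission
  imports Defs "HOL-Real_Asymp.Real_Asymp"
begin

(* Write F = P G with P z = (z - x_1)...(z - x_n) and G entire. On the lines \<bar>Im z\<bar> = y we have
   \<bar>P z\<bar> \<ge> y^n, so \<bar>G\<bar> \<le> exp (y \<sigma>(y)) / y^n there; inside the strip G is bounded, so the
   Phragmen-Lindelof principle for the strip (the maximum modulus principle applied to
   G z exp (-\<epsilon> (z - c)^2) on long rectangles, then \<epsilon> \<rightarrow> 0) gives the same bound on the real
   axis. For x \<in> [a, b] finally \<bar>P x\<bar> \<le> (b - a)^n. *)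

lemma norm_prod_list_le_power:
  fixes f :: "'a \<Rightarrow> 'b :: real_normed_div_algebra"
  assumes "\<And>x. x \<in> set xs \<Longrightarrow> norm (f x) \<le> c"
  shows "norm (\<Prod>x\<leftarrow>xs. f x) \<le> c ^ length xs"
  using assms
proof (induction xs)
  case (Cons a xs)
  then have "norm (f a) * norm (\<Prod>x\<leftarrow>xs. f x) \<le> c * c ^ length xs"
    by (intro mult_mono) (auto intro: order_trans[OF norm_ge_zero])
  then show ?case by (simp add: norm_mult)
qed simp

lemma power_le_norm_prod_list:
  fixes f :: "'a \<Rightarrow> 'b :: real_normed_div_algebra"
  assumes "\<And>x. x \<in> set xs \<Longrightarrow> c \<le> norm (f x)" and "0 \<le> c"
  shows "c ^ length xs \<le> norm (\<Prod>x\<leftarrow>xs. f x)"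
  using assms
proof (induction xs)
  case (Cons a xs)
  then have "c * c ^ length xs \<le> norm (f a) * norm (\<Prod>x\<leftarrow>xs. f x)"
    by (intro mult_mono) auto
  then show ?case by (simp add: norm_mult)
qed simp

lemma mult_mono_on_le_max_0:
  fixes \<sigma> :: "real \<Rightarrow> real"
  assumes "mono_on {0<..} \<sigma>" and "0 \<le> t" and "t \<le> y"
  shows "t * \<sigma> t \<le> max 0 (y * \<sigma> y)"
proof (cases "t = 0")
  case False
  then have "t * \<sigma> t \<le> t * \<sigma> y"
    using assms by (auto intro: mult_left_mono mono_onD)
  also have "\<dots> \<le> max 0 (y * \<sigma> y)"
    using assms by (cases "\<sigma> y \<ge> 0") (auto simp: mult_right_mono mult_nonneg_nonpos le_max_iff_disj)
  finally show ?thesis .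
qed simp

lemma norm_exp_neg_square:
  "norm (exp (- complex_of_real \<epsilon> * (z - complex_of_real c)\<^sup>2)) = exp (\<epsilon> * ((Im z)\<^sup>2 - (Re z - c)\<^sup>2))"
  by (simp add: power2_eq_square algebra_simps)

lemma le_mult_INF:
  fixes k c :: real and f :: "'a \<Rightarrow> real"
  assumes "A \<noteq> {}" and "0 \<le> k" and "\<And>y. y \<in> A \<Longrightarrow> c \<le> k * f y"
  shows "c \<le> k * (INF y\<in>A. f y)"
proof (cases "k = 0")
  case True
  with assms show ?thesis by auto
next
  case False
  with assms have "c / k \<le> (INF y\<in>A. f y)"
    by (intro cINF_greatest) (auto simp: pos_divide_le_eq mult.commute)
  with False assms(2) show ?thesis by (simp add: pos_divide_le_eq mult.commute)
qed

lemma strip_rectangle_maximum_modulus: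
  fixes H :: "complex \<Rightarrow> complex"
  assumes hol: "H holomorphic_on {z. \<bar>Im z\<bar> < y}"
    and cont: "continuous_on {z. \<bar>Im z\<bar> \<le> y} H"
    and edges: "\<And>z. \<bar>Im z\<bar> \<le> y \<Longrightarrow> \<bar>Re z - c\<bar> \<le> R \<Longrightarrow>
      \<bar>Im z\<bar> = y \<or> \<bar>Re z - c\<bar> = R \<Longrightarrow> norm (H z) \<le> B"
    and "\<bar>Im z0\<bar> \<le> y" and "\<bar>Re z0 - c\<bar> \<le> R"
  shows "norm (H z0) \<le> B"
proof -
  define S where "S = cbox (Complex (c - R) (- y)) (Complex (c + R) y)"
  show ?thesis
  proof (rule maximum_modulus_frontier[of H S])
    have "interior S \<subseteq> {z. \<bar>Im z\<bar> < y}"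
      by (auto simp: S_def box_complex_eq)
    with hol show "H holomorphic_on interior S"
      by (rule holomorphic_on_subset)
    have "closure S \<subseteq> {z. \<bar>Im z\<bar> \<le> y}"
      unfolding S_def closure_cbox by (auto simp: cbox_complex_eq)
    with cont show "continuous_on (closure S) H"
      by (rule continuous_on_subset)
    show "bounded S"
      by (simp add: S_def)
    show "z0 \<in> S"
      using assms(4,5) by (auto simp: S_def cbox_complex_eq)
  next
    fix z assume "z \<in> frontier S"
    then have "z \<in> S" "z \<notin> box (Complex (c - R) (- y)) (Complex (c + R) y)"
      by (auto simp: S_def frontier_cbox)
    then show "norm (H z) \<le> B"
      by (intro edges) (auto simp: S_def cbox_complex_eq box_complex_eq)
  qed
qed

lemma strip_damped_maximum_modulus:
  fixes G :: "complex \<Rightarrow> complex" and y K M \<epsilon> :: real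
  assumes hol: "G holomorphic_on {z. \<bar>Im z\<bar> < y}"
    and cont: "continuous_on {z. \<bar>Im z\<bar> \<le> y} G"
    and bounded: "\<And>z. \<bar>Im z\<bar> \<le> y \<Longrightarrow> norm (G z) \<le> K"
    and boundary: "\<And>z. \<bar>Im z\<bar> = y \<Longrightarrow> norm (G z) \<le> M"
    and "M > 0" and "\<epsilon> > 0" and z0: "\<bar>Im z0\<bar> \<le> y"
  shows "norm (G z0) \<le> M * exp (\<epsilon> * y\<^sup>2)"
proof -
  define c where "c = Re z0"
  define H where "H z = G z * exp (- complex_of_real \<epsilon> * (z - complex_of_real c)\<^sup>2)" for z
  have norm_H: "norm (H z) = norm (G z) * exp (\<epsilon> * ((Im z)\<^sup>2 - (Re z - c)\<^sup>2))" for z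
    by (simp only: H_def norm_mult norm_exp_neg_square)
  have "((\<lambda>R. K * exp (- \<epsilon> * R\<^sup>2)) \<longlongrightarrow> 0) at_top"
    using \<open>\<epsilon> > 0\<close> by real_asymp
  then have "\<forall>\<^sub>F R in at_top. K * exp (- \<epsilon> * R\<^sup>2) < M \<and> 0 \<le> R"
    using \<open>M > 0\<close> by (intro eventually_conj order_tendstoD(2) eventually_ge_at_top)
  then obtain R where R: "K * exp (- \<epsilon> * R\<^sup>2) \<le> M" "0 \<le> R"
    unfolding eventually_at_top_linorder by (meson less_imp_le order_refl)
  have "norm (H z0) \<le> M * exp (\<epsilon> * y\<^sup>2)"
  proof (rule strip_rectangle_maximum_modulus[of H y c R])
    show "H holomorphic_on {z. \<bar>Im z\<bar> < y}"
      unfolding H_def using hol by (intro holomorphic_intros)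
    show "continuous_on {z. \<bar>Im z\<bar> \<le> y} H"
      unfolding H_def using cont by (intro continuous_intros)
  next
    fix z assume in_strip: "\<bar>Im z\<bar> \<le> y" and on_edge: "\<bar>Im z\<bar> = y \<or> \<bar>Re z - c\<bar> = R"
    have "(Im z)\<^sup>2 \<le> y\<^sup>2"
      using in_strip by (metis abs_ge_zero power2_abs power_mono)
    with \<open>\<epsilon> > 0\<close> have "exp (\<epsilon> * ((Im z)\<^sup>2 - (Re z - c)\<^sup>2)) \<le> exp (- \<epsilon> * (Re z - c)\<^sup>2) * exp (\<epsilon> * y\<^sup>2)"
      by (simp add: algebra_simps flip: exp_add)
    then have norm_H_le: "norm (H z) \<le> norm (G z) * exp (- \<epsilon> * (Re z - c)\<^sup>2) * exp (\<epsilon> * y\<^sup>2)"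
      by (simp add: norm_H mult.assoc mult_left_mono)
    have "norm (G z) * exp (- \<epsilon> * (Re z - c)\<^sup>2) \<le> M"
    proof (cases "\<bar>Im z\<bar> = y")
      case True
      have "exp (- \<epsilon> * (Re z - c)\<^sup>2) \<le> 1"
        using \<open>\<epsilon> > 0\<close> by simp
      with boundary[OF True] \<open>M > 0\<close> show ?thesis
        using mult_mono[of "norm (G z)" M "exp (- \<epsilon> * (Re z - c)\<^sup>2)" 1] by simp
    next
      case False
      with on_edge have "(Re z - c)\<^sup>2 = R\<^sup>2"
        by (metis power2_abs)
      then have "norm (G z) * exp (- \<epsilon> * (Re z - c)\<^sup>2) = norm (G z) * exp (- \<epsilon> * R\<^sup>2)"
        by simp
      also have "\<dots> \<le> K * exp (- \<epsilon> * R\<^sup>2)"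
        using bounded[OF in_strip] by (rule mult_right_mono) simp
      finally show ?thesis
        using R(1) by linarith
    qed
    then have "norm (G z) * exp (- \<epsilon> * (Re z - c)\<^sup>2) * exp (\<epsilon> * y\<^sup>2) \<le> M * exp (\<epsilon> * y\<^sup>2)"
      by (rule mult_right_mono) simp
    with norm_H_le show "norm (H z) \<le> M * exp (\<epsilon> * y\<^sup>2)"
      by linarith
  qed (use z0 R in \<open>simp_all add: c_def\<close>)
  moreover have "norm (G z0) * 1 \<le> norm (H z0)"
    unfolding norm_H c_def using \<open>\<epsilon> > 0\<close> by (intro mult_left_mono) auto
  ultimately show ?thesis
    by linarith
qed

lemma phragmen_lindelof_strip:
  fixes G :: "complex \<Rightarrow> complex" and y K M :: real
  assumes "G holomorphic_on {z. \<bar>Im z\<bar> < y}"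
    and "continuous_on {z. \<bar>Im z\<bar> \<le> y} G"
    and "\<And>z. \<bar>Im z\<bar> \<le> y \<Longrightarrow> norm (G z) \<le> K"
    and "\<And>z. \<bar>Im z\<bar> = y \<Longrightarrow> norm (G z) \<le> M"
    and "M > 0" and "\<bar>Im z0\<bar> \<le> y"
  shows "norm (G z0) \<le> M"
proof -
  have "((\<lambda>\<epsilon>. M * exp (\<epsilon> * y\<^sup>2)) \<longlongrightarrow> M * exp (0 * y\<^sup>2)) (at_right 0)"
    by (intro tendsto_intros)
  moreover have "\<forall>\<^sub>F \<epsilon> in at_right 0. norm (G z0) \<le> M * exp (\<epsilon> * y\<^sup>2)"
    using eventually_at_right_less[of 0]
    by eventually_elim (use strip_damped_maximum_modulus[OF assms(1-5) _ assms(6)] in auto)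
  ultimately show ?thesis
    using tendsto_lowerbound by fastforce
qed

lemma bounded_on_strip_if_bounded_off_band:
  fixes G :: "complex \<Rightarrow> 'a :: real_normed_vector"
  assumes "continuous_on {z. \<bar>Im z\<bar> \<le> y} G"
    and "\<And>z. \<bar>Im z\<bar> \<le> y \<Longrightarrow> R \<le> \<bar>Re z - c\<bar> \<Longrightarrow> norm (G z) \<le> B"
  obtains K where "\<And>z. \<bar>Im z\<bar> \<le> y \<Longrightarrow> norm (G z) \<le> K"
proof -
  define S where "S = cbox (Complex (c - R) (- y)) (Complex (c + R) y)"
  have "S \<subseteq> {z. \<bar>Im z\<bar> \<le> y}"
    by (auto simp: S_def cbox_complex_eq)
  then have "compact (G ` S)"
    by (intro compact_continuous_image continuous_on_subset[OF assms(1)]) (auto simp: S_def)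
  then obtain K where K: "\<And>w. w \<in> G ` S \<Longrightarrow> norm w \<le> K"
    by (meson bounded_iff compact_imp_bounded)
  show thesis
  proof
    fix z :: complex assume z: "\<bar>Im z\<bar> \<le> y"
    show "norm (G z) \<le> max K B"
    proof (cases "R \<le> \<bar>Re z - c\<bar>")
      case False
      with z have "z \<in> S"
        by (auto simp: S_def cbox_complex_eq)
      with K show ?thesis
        by fastforce
    qed (use assms(2) z in fastforce)
  qed
qed

lemma Im_power_le_norm_prod_list:
  "\<bar>Im z\<bar> ^ length xs \<le> norm (\<Prod>x\<leftarrow>xs. z - complex_of_real x)"
  by (rule power_le_norm_prod_list) (use abs_Im_le_cmod[of "z - complex_of_real _"] in auto)

lemma norm_on_zero_interval_le_at_height:
  fixes \<sigma> :: "real \<Rightarrow> real" and F :: "complex \<Rightarrow> complex" and a b x y :: real and n :: nat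
  assumes mono: "mono_on {0<..} \<sigma>"
    and "F holomorphic_on UNIV"
    and growth: "\<And>z. norm (F z) \<le> exp (\<bar>Im z\<bar> * \<sigma> \<bar>Im z\<bar>)"
    and "has_n_zeros_on F n {a..b}"
    and x: "x \<in> {a..b}" and "y > 0"
  shows "norm (F (complex_of_real x)) \<le> (b - a) ^ n * (exp (y * \<sigma> y) / y ^ n)"
proof -
  obtain xs G where xs: "length xs = n" "set xs \<subseteq> {a..b}" and G: "G holomorphic_on UNIV"
    and F_eq: "\<And>z. F z = (\<Prod>t\<leftarrow>xs. z - complex_of_real t) * G z"
    using \<open>has_n_zeros_on F n {a..b}\<close> unfolding has_n_zeros_on_def by blast
  define P where "P z = (\<Prod>t\<leftarrow>xs. z - complex_of_real t)" for z
  have norm_F: "norm (F z) = norm (P z) * norm (G z)" for z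
    by (simp add: F_eq P_def norm_mult)
  have G_cont: "continuous_on A G" for A
    using G holomorphic_on_imp_continuous_on continuous_on_subset by blast
  have G_far: "norm (G z) \<le> exp (max 0 (y * \<sigma> y))"
    if z: "\<bar>Im z\<bar> \<le> y" "b - a + 1 \<le> \<bar>Re z - x\<bar>" for z
  proof -
    have "1 ^ n \<le> norm (P z)"
      unfolding P_def xs(1)[symmetric]
    proof (rule power_le_norm_prod_list)
      fix t assume "t \<in> set xs"
      with xs(2) have "t \<in> {a..b}"
        by blast
      with x z(2) have "1 \<le> \<bar>Re (z - complex_of_real t)\<bar>"
        by auto
      then show "1 \<le> norm (z - complex_of_real t)"
        using abs_Re_le_cmod order_trans by blast
    qed simp
    then have "norm (G z) \<le> norm (F z)"
      using norm_F mult_right_mono[of 1 "norm (P z)" "norm (G z)"] by simp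
    also have "\<dots> \<le> exp (max 0 (y * \<sigma> y))"
      using growth[of z] mult_mono_on_le_max_0[OF mono _ z(1)]
      by (meson abs_ge_zero exp_le_cancel_iff order_trans)
    finally show ?thesis .
  qed
  obtain K where K: "\<And>z. \<bar>Im z\<bar> \<le> y \<Longrightarrow> norm (G z) \<le> K"
    using bounded_on_strip_if_bounded_off_band[OF G_cont G_far] by blast
  have G_line: "norm (G z) \<le> exp (y * \<sigma> y) / y ^ n" if z: "\<bar>Im z\<bar> = y" for z
  proof -
    have "y ^ n * norm (G z) \<le> norm (F z)"
      using Im_power_le_norm_prod_list[of z xs] z xs(1) norm_F
      by (simp add: P_def mult_right_mono)
    also have "\<dots> \<le> exp (y * \<sigma> y)"
      using growth[of z] z by simp
    finally show ?thesis
      using \<open>y > 0\<close> by (simp add: field_simps)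
  qed
  have G_x: "norm (G (complex_of_real x)) \<le> exp (y * \<sigma> y) / y ^ n"
    using \<open>y > 0\<close> holomorphic_on_subset[OF G]
    by (intro phragmen_lindelof_strip[OF _ G_cont K G_line]) auto
  have P_x: "norm (P (complex_of_real x)) \<le> (b - a) ^ n"
    unfolding P_def xs(1)[symmetric]
  proof (rule norm_prod_list_le_power)
    fix t assume "t \<in> set xs"
    with xs(2) have "t \<in> {a..b}"
      by blast
    with x show "norm (complex_of_real x - complex_of_real t) \<le> b - a"
      by (auto simp flip: of_real_diff)
  qed
  show ?thesis
    unfolding norm_F by (rule mult_mono[OF P_x G_x]) (use x in simp_all)
qed

theorem lemma3p4:
  fixes \<sigma> :: "real \<Rightarrow> real" and F :: "complex \<Rightarrow> complex" and a b x :: real and n :: nat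
  assumes "mono_on {0<..} \<sigma>"
    and "filterlim \<sigma> at_top at_top"
    and "F holomorphic_on UNIV"
    and "\<forall>z. norm (F z) \<le> exp (\<bar>Im z\<bar> * \<sigma> \<bar>Im z\<bar>)"
    and "has_n_zeros_on F n {a..b}"
    and "x \<in> {a..b}"
  shows "norm (F (complex_of_real x)) \<le> (b - a) ^ n * (INF y\<in>{0<..}. exp (y * \<sigma> y) / y ^ n)"
proof (rule le_mult_INF)
  show "0 \<le> (b - a) ^ n"
    using \<open>x \<in> {a..b}\<close> by simp
  show "norm (F (complex_of_real x)) \<le> (b - a) ^ n * (exp (y * \<sigma> y) / y ^ n)" if "y \<in> {0<..}" for y
    using norm_on_zero_interval_le_at_height[OF assms(1,3) _ assms(5,6)] assms(4) that by simp
qed simp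

end
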